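(* Let $\mu$ be a distribution over $\{-1,+1\}^n$ and $\alpha\in(0,1)$. Suppose that for every $\Lambda\subseteq[n]$ and every $\sigma\in\Omega(\mu_\Lambda)$, the conditional marginal distribution $\mu^\sigma_{[n]\setminus\Lambda}$ is $(1/\alpha)$-product dominated. Then for every integer $\ell$ with $1/\alpha\le\ell\le n$, the distribution $\mu$ satisfies $\ell$-uniform block factorization of entropy with parameter $C=\left(\frac{\mathrm e n}{\ell}\right)^{1/\alpha+1}$.
   Context: For a distribution $\mu$ on $\{-1,+1\}^n$: $\Omega(\mu)$ is its support; $\mu_\Lambda$ the marginal on $\Lambda$, $\mu_i=\mu_{\{i\}}$; $\mu^\sigma$ the conditional distribution given $\sigma\in\Omega(\mu_\Lambda)$ on $\Lambda$, $\mu^\sigma_S$ its marginal on $S$. Product domination: $\nu$ on $\{-1,+1\}^m$ is $(1/\alpha)$-product dominated if for all $z\in\mathbb R_{>0}^m$, $g_\nu(z_1^\alpha,\dots,z_m^\alpha)^{1/\alpha}\le\prod_{i=1}^m(\nu_i(+1)z_i+\nu_i(-1))$, where $g_\nu(z)=\sum_\sigma\nu(\sigma)\prod_{i:\sigma_i=+1}z_i$. Uniform block factorization: for integers $1\le\ell\le n$ and $C>0$, $\mu$ satisfies $\ell$-uniform block factorization of entropy with parameter $C$ if for all $f:\Omega(\mu)\to\mathbb R_{\ge0}$, $\mathrm{Ent}_\mu(f)\le\frac{C}{\binom n\ell}\sum_{S\in\binom{[n]}{\ell}}\mu[\mathrm{Ent}_S f]$, where $\mu[\mathrm{Ent}_S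 f]=\sum_{\sigma\in\Omega(\mu_{[n]\setminus S})}\mu_{[n]\setminus S}(\sigma)\mathrm{Ent}_{\mu^\sigma}(f)$ and $\mathrm{Ent}_\nu(f)=\mathbb E_\nu[f\log f]-\mathbb E_\nu[f]\log\mathbb E_\nu[f]$ ($0\log0=0$). *)

theory Defs
  imports "HOL-Analysis.Analysis" "HOL-Library.FuncSet"
begin

text \<open>Configurations on an index set S (a subset of [n] = {0..<n}) are extensional
  functions S \<rightarrow> {-1,+1} (value undefined outside S).\<close>

definition cube :: "nat set \<Rightarrow> (nat \<Rightarrow> int) set" where
  "cube S = PiE S (\<lambda>_. {-1, 1})"

definition is_dist :: "nat set \<Rightarrow> ((nat \<Rightarrow> int) \<Rightarrow> real) \<Rightarrow> bool" where
  "is_dist S \<nu> \<longleftrightarrow> (\<forall>\<sigma>. 0 \<le> \<nu> \<sigma>) \<and> (\<forall>\<sigma>. \<sigma> \<notin> cube S \<longrightarrow> \<nu> \<sigma> = 0) \<and> sum \<nu> (cube S) = 1"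

definition supp :: "nat set \<Rightarrow> ((nat \<Rightarrow> int) \<Rightarrow> real) \<Rightarrow> (nat \<Rightarrow> int) set" where
  "supp S \<nu> = {\<sigma> \<in> cube S. \<nu> \<sigma> \<noteq> 0}"

definition marg :: "nat set \<Rightarrow> ((nat \<Rightarrow> int) \<Rightarrow> real) \<Rightarrow> nat set \<Rightarrow> (nat \<Rightarrow> int) \<Rightarrow> real" where
  "marg S \<nu> \<Lambda> \<tau> = (\<Sum>\<sigma>\<in>cube S. if restrict \<sigma> \<Lambda> = \<tau> then \<nu> \<sigma> else 0)"

definition cond :: "nat set \<Rightarrow> ((nat \<Rightarrow> int) \<Rightarrow> real) \<Rightarrow> nat set \<Rightarrow> (nat \<Rightarrow> int) \<Rightarrow> (nat \<Rightarrow> int) \<Rightarrow> real" where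
  "cond S \<nu> \<Lambda> \<tau> \<eta> = (if \<eta> \<in> cube S \<and> restrict \<eta> \<Lambda> = \<tau> then \<nu> \<eta> / marg S \<nu> \<Lambda> \<tau> else 0)"

definition site_prob :: "nat set \<Rightarrow> ((nat \<Rightarrow> int) \<Rightarrow> real) \<Rightarrow> nat \<Rightarrow> int \<Rightarrow> real" where
  "site_prob S \<nu> i s = (\<Sum>\<sigma>\<in>cube S. if \<sigma> i = s then \<nu> \<sigma> else 0)"

definition gen_poly :: "nat set \<Rightarrow> ((nat \<Rightarrow> int) \<Rightarrow> real) \<Rightarrow> (nat \<Rightarrow> real) \<Rightarrow> real" where
  "gen_poly S \<nu> z = (\<Sum>\<sigma>\<in>cube S. \<nu> \<sigma> * (\<Prod>i\<in>{i\<in>S. \<sigma> i = 1}. z i))"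

definition product_dominated :: "nat set \<Rightarrow> ((nat \<Rightarrow> int) \<Rightarrow> real) \<Rightarrow> real \<Rightarrow> bool" where
  "product_dominated S \<nu> c \<longleftrightarrow>
     (\<forall>z::nat \<Rightarrow> real. (\<forall>i\<in>S. 0 < z i) \<longrightarrow>
        (gen_poly S \<nu> (\<lambda>i. z i powr (1 / c))) powr c
          \<le> (\<Prod>i\<in>S. site_prob S \<nu> i 1 * z i + site_prob S \<nu> i (-1)))"

definition xlogx :: "real \<Rightarrow> real" where
  "xlogx x = (if x = 0 then 0 else x * ln x)"

definition expect :: "nat set \<Rightarrow> ((nat \<Rightarrow> int) \<Rightarrow> real) \<Rightarrow> ((nat \<Rightarrow> int) \<Rightarrow> real) \<Rightarrow> real" where
  "expect S \<nu> f = (\<Sum>\<sigma>\<in>cube S. \<nu> \<sigma> * f \<sigma>)"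

definition Ent :: "nat set \<Rightarrow> ((nat \<Rightarrow> int) \<Rightarrow> real) \<Rightarrow> ((nat \<Rightarrow> int) \<Rightarrow> real) \<Rightarrow> real" where
  "Ent S \<nu> f = expect S \<nu> (\<lambda>\<sigma>. xlogx (f \<sigma>)) - xlogx (expect S \<nu> f)"

definition block_ent :: "nat \<Rightarrow> ((nat \<Rightarrow> int) \<Rightarrow> real) \<Rightarrow> nat set \<Rightarrow> ((nat \<Rightarrow> int) \<Rightarrow> real) \<Rightarrow> real" where
  "block_ent n \<mu> B f =
     (\<Sum>\<tau>\<in>supp ({0..<n} - B) (marg {0..<n} \<mu> ({0..<n} - B)).
        marg {0..<n} \<mu> ({0..<n} - B) \<tau> * Ent {0..<n} (cond {0..<n} \<mu> ({0..<n} - B) \<tau>) f)"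

definition uniform_block_factorization :: "nat \<Rightarrow> ((nat \<Rightarrow> int) \<Rightarrow> real) \<Rightarrow> nat \<Rightarrow> real \<Rightarrow> bool" where
  "uniform_block_factorization n \<mu> l C \<longleftrightarrow>
     (\<forall>f. (\<forall>\<sigma>\<in>supp {0..<n} \<mu>. 0 \<le> f \<sigma>) \<longrightarrow>
        Ent {0..<n} \<mu> f
          \<le> C / real (n choose l) * (\<Sum>B\<in>{B. B \<subseteq> {0..<n} \<and> card B = l}. block_ent n \<mu> B f))"

end

theory Submission
  imports Defs
begin

text \<open>Write A(T) = \<mu>[xlogx(\<mu>[f | \<sigma>_T])] for T \<subseteq> [n], so that Ent f = A([n]) - A({}) and
  \<mu>[Ent_B f] = A([n]) - A([n] - B). On each fibre of \<sigma>_T, the Gibbs variational principle tested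
  against product tilts \<Prod>_i y_i(\<sigma>_i)^\<alpha>, whose mean product domination controls, gives entropic
  independence: \<Sum>_{i \<notin> T} (A(T + i) - A(T)) \<le> (1/\<alpha>)(A([n]) - A(T)). Averaged over |T| = k, the gap
  b_k = A([n]) - avg_{|T| = k} A(T) satisfies b_{k+1} \<ge> (1 - 1/(\<alpha>(n - k))) b_k. Iterating from k = 0
  to n - \<ell> and bounding the product of these factors below by (\<ell>/(e n))^{1/\<alpha>+1} gives the claim.\<close>

section \<open>Entropy and the perspective of xlogx\<close>

lemma xlogx_eq: "xlogx x = x * ln x"
  by (simp add: xlogx_def)

definition persp_xlogx :: "real \<Rightarrow> real \<Rightarrow> real" where
  "persp_xlogx a b = b * xlogx (a / b)"

lemma persp_xlogx_eq: "persp_xlogx a b = (if b = 0 then 0 else a * ln (a / b))"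
  by (simp add: persp_xlogx_def xlogx_eq)

lemma persp_xlogx_0_right [simp]: "persp_xlogx a 0 = 0"
  by (simp add: persp_xlogx_def)

lemma persp_xlogx_0_left [simp]: "persp_xlogx 0 b = 0"
  by (simp add: persp_xlogx_def xlogx_def)

lemma persp_xlogx_1_right [simp]: "persp_xlogx a 1 = xlogx a"
  by (simp add: persp_xlogx_def)

lemma persp_xlogx_scale: "0 < M \<Longrightarrow> persp_xlogx (M * a) (M * b) = M * persp_xlogx a b"
  by (simp add: persp_xlogx_eq)

lemma persp_xlogx_le_mult_ln:
  assumes "0 \<le> a" "0 < E" "0 < b \<or> a = 0" "a / (E * b) \<le> y"
  shows "persp_xlogx a b - a * ln E \<le> a * ln y"
proof (cases "a = 0")
  case False
  then have "0 < a" "0 < b" using assms by auto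
  then have "ln (a / b) - ln E = ln (a / (E * b))"
    using assms(2) by (simp add: ln_div ln_mult)
  also have "\<dots> \<le> ln y"
    using \<open>0 < a\<close> \<open>0 < b\<close> assms(2,4) by (intro ln_mono) auto
  finally show ?thesis
    using \<open>0 < a\<close> \<open>0 < b\<close> by (simp add: persp_xlogx_eq right_diff_distrib[symmetric] mult_left_mono)
qed simp

lemma mult_ln_ratio_le:
  fixes p f h E H :: real
  assumes "0 \<le> p" "0 < p \<longrightarrow> 0 \<le> f" "0 < h" "0 < E" "0 < H"
  shows "p * f * (ln h - ln f + ln E - ln H) \<le> p * h * E / H - p * f"
proof (cases "p * f = 0")
  case True
  have "0 \<le> p * h * E / H" using assms by simp
  then show ?thesis unfolding True by simp
next
  case False
  then have "0 < p" "0 < f" using assms(1,2) by auto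
  have "ln h - ln f + ln E - ln H = ln (h * E / (f * H))"
    using \<open>0 < f\<close> assms(3-5) by (simp add: ln_div ln_mult)
  also have "\<dots> \<le> h * E / (f * H) - 1"
    using \<open>0 < f\<close> assms(3-5) by (intro ln_le_minus_one) simp
  finally have "p * f * (ln h - ln f + ln E - ln H) \<le> p * f * (h * E / (f * H) - 1)"
    using \<open>0 < p\<close> \<open>0 < f\<close> by (intro mult_left_mono) auto
  also have "\<dots> = p * h * E / H - p * f" using \<open>0 < f\<close> assms(5) by (simp add: field_simps)
  finally show ?thesis .
qed

lemma Ent_variational:
  assumes S: "finite S" and p: "\<forall>\<sigma>\<in>cube S. 0 \<le> p \<sigma>"
    and f: "\<forall>\<sigma>\<in>cube S. 0 < p \<sigma> \<longrightarrow> 0 \<le> f \<sigma>" and h: "\<forall>\<sigma>\<in>cube S. 0 < h \<sigma>"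
  shows "expect S p (\<lambda>\<sigma>. f \<sigma> * ln (h \<sigma>)) \<le> Ent S p f + expect S p f * ln (expect S p h)"
proof -
  define X where "X = cube S"
  define E where "E = expect S p f"
  define H where "H = expect S p h"
  have "finite X" unfolding X_def cube_def using S by (simp add: finite_PiE)
  have pf: "\<forall>x\<in>X. 0 \<le> p x * f x"
    using p f unfolding X_def by (metis less_eq_real_def mult_eq_0_iff mult_nonneg_nonneg)
  have E_sum: "E = (\<Sum>x\<in>X. p x * f x)" unfolding E_def expect_def X_def ..
  have Ent_sum: "Ent S p f = (\<Sum>x\<in>X. p x * f x * ln (f x)) - E * ln E"
    unfolding Ent_def E_sum unfolding expect_def X_def by (simp add: xlogx_eq mult.assoc)
  have lhs_sum: "expect S p (\<lambda>\<sigma>. f \<sigma> * ln (h \<sigma>)) = (\<Sum>x\<in>X. p x * f x * ln (h x))"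
    unfolding expect_def X_def by (simp add: mult.assoc)
  show ?thesis
  proof (cases "\<forall>x\<in>X. p x * f x = 0")
    case True
    then have "(\<Sum>x\<in>X. p x * f x * ln (g x)) = 0" for g by (intro sum.neutral) simp
    moreover have "E = 0" unfolding E_sum using True by (intro sum.neutral) simp
    ultimately show ?thesis unfolding lhs_sum Ent_sum E_def[symmetric] by simp
  next
    case False
    then obtain y where "y \<in> X" "p y * f y \<noteq> 0" by blast
    then have "0 < p y" "0 < p y * f y" using p pf unfolding X_def by (auto simp: order_less_le)
    have "0 < E" unfolding E_sum using \<open>finite X\<close> \<open>y \<in> X\<close> \<open>0 < p y * f y\<close> pf
      by (intro sum_pos2[of X y]) auto
    have "0 < H" unfolding H_def expect_def using \<open>finite X\<close> \<open>y \<in> X\<close> \<open>0 < p y\<close> p h unfolding X_def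
      by (intro sum_pos2[of "cube S" y]) (auto intro: mult_nonneg_nonneg less_imp_le)
    have "(\<Sum>x\<in>X. p x * f x * (ln (h x) - ln (f x) + ln E - ln H)) \<le> (\<Sum>x\<in>X. p x * h x * E / H - p x * f x)"
      using p f h \<open>0 < E\<close> \<open>0 < H\<close> unfolding X_def by (intro sum_mono mult_ln_ratio_le) auto
    also have "\<dots> = 0" unfolding H_def expect_def E_sum X_def using \<open>0 < H\<close>
      by (simp add: sum_subtractf sum_divide_distrib[symmetric] sum_distrib_right[symmetric] H_def expect_def)
    finally have "(\<Sum>x\<in>X. p x * f x * ln (h x)) - (\<Sum>x\<in>X. p x * f x * ln (f x)) + E * ln E - E * ln H \<le> 0"
      unfolding E_sum by (simp add: algebra_simps sum_subtractf sum_distrib_left sum_distrib_right sum.distrib)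
    then show ?thesis unfolding lhs_sum Ent_sum H_def[symmetric] E_def[symmetric] by simp
  qed
qed

lemma Ent_nonneg:
  assumes "finite S" "\<forall>\<sigma>\<in>cube S. 0 \<le> p \<sigma>" "sum p (cube S) = 1"
    and "\<forall>\<sigma>\<in>cube S. 0 < p \<sigma> \<longrightarrow> 0 \<le> f \<sigma>"
  shows "0 \<le> Ent S p f"
  using Ent_variational[OF assms(1,2,4), of "\<lambda>_. 1"] assms(3) by (simp add: expect_def)

section \<open>Marginals and conditionals on the cube\<close>

lemma finite_cube [simp]: "finite S \<Longrightarrow> finite (cube S)"
  by (simp add: cube_def finite_PiE)

lemma cube_empty: "cube {} = {\<lambda>_. undefined}"
  by (simp add: cube_def)

lemma restrict_in_cube: "\<sigma> \<in> cube S \<Longrightarrow> U \<subseteq> S \<Longrightarrow> restrict \<sigma> U \<in> cube U"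
  unfolding cube_def by (auto simp: PiE_def Pi_def)

lemma restrict_cube_self: "\<sigma> \<in> cube S \<Longrightarrow> restrict \<sigma> S = \<sigma>"
  unfolding cube_def by (auto simp: PiE_def extensional_def restrict_def)

lemma cube_coord: "\<sigma> \<in> cube S \<Longrightarrow> i \<in> S \<Longrightarrow> \<sigma> i = 1 \<or> \<sigma> i = -1"
  unfolding cube_def by (auto simp: PiE_def Pi_def)

lemma sum_cube_insert:
  assumes "finite T" "i \<notin> T"
  shows "(\<Sum>\<eta>\<in>cube (insert i T). G \<eta>) = (\<Sum>\<tau>\<in>cube T. G (\<tau>(i := 1)) + G (\<tau>(i := -1)))"
proof -
  have eq: "cube (insert i T) = (\<lambda>(y, g). g(i := y)) ` ({-1, 1} \<times> cube T)"
    unfolding cube_def by (rule PiE_insert_eq)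
  have inj: "inj_on (\<lambda>(y, g). g(i := y)) ({-1, 1} \<times> cube T)"
    unfolding cube_def using inj_combinator[OF assms(2), of "\<lambda>_. {-1::int, 1}"] by simp
  have "(\<Sum>\<eta>\<in>cube (insert i T). G \<eta>) = (\<Sum>y\<in>{-1, 1}. \<Sum>g\<in>cube T. G (g(i := y)))"
    unfolding eq sum.reindex[OF inj] sum.cartesian_product by (simp add: case_prod_unfold)
  then show ?thesis by (simp add: sum.distrib add.commute)
qed

lemma restrict_insert_eq_fun_upd:
  assumes "\<tau> \<in> cube T" "i \<notin> T"
  shows "restrict \<sigma> (insert i T) = \<tau>(i := s) \<longleftrightarrow> restrict \<sigma> T = \<tau> \<and> \<sigma> i = s"
proof -
  have "\<tau> x = undefined" if "x \<notin> T" for x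
    using assms(1) that unfolding cube_def by (auto simp: PiE_def extensional_def)
  then show ?thesis
    using assms(2) by (auto simp: fun_eq_iff restrict_def split: if_splits)
qed

lemma sum_cube_marg:
  assumes "finite S" "U \<subseteq> S"
  shows "(\<Sum>\<eta>\<in>cube U. marg S w U \<eta> * g \<eta>) = (\<Sum>\<sigma>\<in>cube S. w \<sigma> * g (restrict \<sigma> U))"
proof -
  have "(\<Sum>\<eta>\<in>cube U. marg S w U \<eta> * g \<eta>)
     = (\<Sum>\<sigma>\<in>cube S. \<Sum>\<eta>\<in>cube U. if restrict \<sigma> U = \<eta> then w \<sigma> * g \<eta> else 0)"
    unfolding marg_def sum_distrib_right by (subst sum.swap) (intro sum.cong refl, auto)
  also have "\<dots> = (\<Sum>\<sigma>\<in>cube S. w \<sigma> * g (restrict \<sigma> U))"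
    using restrict_in_cube[OF _ assms(2)] finite_subset[OF assms(2,1)]
    by (intro sum.cong refl) (simp add: sum.delta)
  finally show ?thesis .
qed

lemma sum_cube_marg_1:
  assumes "finite S" "U \<subseteq> S"
  shows "(\<Sum>\<eta>\<in>cube U. marg S w U \<eta>) = sum w (cube S)"
  using sum_cube_marg[OF assms, of w "\<lambda>_. 1"] by simp

lemma marg_self: "finite S \<Longrightarrow> \<tau> \<in> cube S \<Longrightarrow> marg S w S \<tau> = w \<tau>"
  unfolding marg_def by (simp add: restrict_cube_self sum.delta cong: if_cong)

lemma marg_empty: "marg S w {} (\<lambda>_. undefined) = sum w (cube S)"
  unfolding marg_def by (simp add: restrict_def)

lemma marg_insert:
  assumes "\<tau> \<in> cube T" "i \<notin> T"
  shows "marg N w (insert i T) (\<tau>(i := s))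
       = (\<Sum>\<sigma>\<in>cube N. if restrict \<sigma> T = \<tau> \<and> \<sigma> i = s then w \<sigma> else 0)"
  unfolding marg_def using restrict_insert_eq_fun_upd[OF assms] by simp

lemma site_prob_nonneg: "\<forall>\<sigma>\<in>cube N. 0 \<le> w \<sigma> \<Longrightarrow> 0 \<le> site_prob N w i s"
  unfolding site_prob_def by (intro sum_nonneg) auto

lemma site_prob_sum:
  assumes "i \<in> N"
  shows "site_prob N w i 1 + site_prob N w i (-1) = sum w (cube N)"
  unfolding site_prob_def sum.distrib[symmetric]
  using cube_coord[OF _ assms] by (intro sum.cong refl) auto

lemma site_prob_mult_eq_0:
  assumes "finite N" "\<forall>\<sigma>. 0 \<le> p \<sigma>" "site_prob N p i s = 0"
  shows "site_prob N (\<lambda>\<sigma>. p \<sigma> * g \<sigma>) i s = 0"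
proof -
  have "\<forall>\<sigma>\<in>cube N. (if \<sigma> i = s then p \<sigma> else 0) = 0"
    using assms unfolding site_prob_def by (subst sum_nonneg_eq_0_iff[symmetric]) auto
  then show ?thesis unfolding site_prob_def by (intro sum.neutral) (metis mult_zero_left)
qed

lemma marg_nonneg: "\<forall>\<sigma>. 0 \<le> \<mu> \<sigma> \<Longrightarrow> 0 \<le> marg N \<mu> T \<tau>"
  unfolding marg_def by (intro sum_nonneg) auto

lemma marg_eq_0_fibre:
  assumes "finite N" "\<forall>\<sigma>. 0 \<le> \<mu> \<sigma>" "marg N \<mu> T \<tau> = 0" "\<sigma> \<in> cube N" "restrict \<sigma> T = \<tau>"
  shows "\<mu> \<sigma> = 0"
proof -
  have "\<forall>\<sigma>\<in>cube N. (if restrict \<sigma> T = \<tau> then \<mu> \<sigma> else 0) = 0"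
    using assms(1-3) unfolding marg_def by (subst sum_nonneg_eq_0_iff[symmetric]) auto
  then show ?thesis using assms(4,5) by force
qed

lemma marg_mult_eq_0:
  assumes "finite N" "\<forall>\<sigma>. 0 \<le> \<mu> \<sigma>" "marg N \<mu> T \<tau> = 0"
  shows "marg N (\<lambda>\<sigma>. \<mu> \<sigma> * g \<sigma>) T \<tau> = 0"
  using marg_eq_0_fibre[OF assms] unfolding marg_def by (intro sum.neutral) auto

lemma expect_cond:
  "expect N (cond N \<mu> T \<tau>) g = marg N (\<lambda>\<sigma>. \<mu> \<sigma> * g \<sigma>) T \<tau> / marg N \<mu> T \<tau>"
  unfolding expect_def cond_def marg_def
  by (simp add: sum_divide_distrib if_distrib cong: if_cong) (intro sum.cong refl, auto)

lemma marg_insert_eq_site_prob_cond: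
  assumes "\<tau> \<in> cube T" "i \<notin> T" "marg N \<mu> T \<tau> \<noteq> 0"
  shows "marg N (\<lambda>\<sigma>. \<mu> \<sigma> * g \<sigma>) (insert i T) (\<tau>(i := s))
       = marg N \<mu> T \<tau> * site_prob N (\<lambda>\<sigma>. cond N \<mu> T \<tau> \<sigma> * g \<sigma>) i s"
  unfolding marg_insert[OF assms(1,2)] site_prob_def sum_distrib_left
  using assms(3) by (intro sum.cong refl) (auto simp: cond_def)

text \<open>cond_xlogx N \<mu> f T is \<mu>[xlogx(\<mu>[f | \<sigma>_T])]: the fibre of \<sigma>_T over \<tau>, of \<mu>-mass m and
  (\<mu> f)-mass a, contributes m xlogx(a/m), read as 0 on null fibres.\<close>
definition fibre_xlogx :: "nat set \<Rightarrow> ((nat \<Rightarrow> int) \<Rightarrow> real) \<Rightarrow> ((nat \<Rightarrow> int) \<Rightarrow> real) \<Rightarrow> nat set \<Rightarrow> (nat \<Rightarrow> int) \<Rightarrow> real" where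
  "fibre_xlogx N \<mu> f T \<tau> = persp_xlogx (marg N (\<lambda>\<sigma>. \<mu> \<sigma> * f \<sigma>) T \<tau>) (marg N \<mu> T \<tau>)"

definition cond_xlogx :: "nat set \<Rightarrow> ((nat \<Rightarrow> int) \<Rightarrow> real) \<Rightarrow> ((nat \<Rightarrow> int) \<Rightarrow> real) \<Rightarrow> nat set \<Rightarrow> real" where
  "cond_xlogx N \<mu> f T = (\<Sum>\<tau>\<in>cube T. fibre_xlogx N \<mu> f T \<tau>)"

lemma marg_mult_Ent_cond:
  assumes "finite N" "\<forall>\<sigma>. 0 \<le> \<mu> \<sigma>"
  shows "marg N \<mu> T \<tau> * Ent N (cond N \<mu> T \<tau>) f
       = marg N (\<lambda>\<sigma>. \<mu> \<sigma> * xlogx (f \<sigma>)) T \<tau> - fibre_xlogx N \<mu> f T \<tau>"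
proof (cases "marg N \<mu> T \<tau> = 0")
  case True
  then show ?thesis using marg_mult_eq_0[OF assms True] by (simp add: fibre_xlogx_def)
next
  case False
  then show ?thesis
    unfolding Ent_def expect_cond fibre_xlogx_def persp_xlogx_def by (simp add: right_diff_distrib)
qed

lemma cond_xlogx_self:
  assumes "finite N"
  shows "cond_xlogx N \<mu> f N = expect N \<mu> (\<lambda>\<sigma>. xlogx (f \<sigma>))"
  unfolding cond_xlogx_def expect_def using assms
  by (intro sum.cong refl) (simp add: fibre_xlogx_def marg_self persp_xlogx_def)

lemma cond_xlogx_empty:
  assumes "sum \<mu> (cube N) = 1"
  shows "cond_xlogx N \<mu> f {} = xlogx (expect N \<mu> f)"
  unfolding cond_xlogx_def fibre_xlogx_def cube_empty using assms by (simp add: marg_empty expect_def)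

lemma Ent_eq_cond_xlogx:
  assumes "finite N" "sum \<mu> (cube N) = 1"
  shows "Ent N \<mu> f = cond_xlogx N \<mu> f N - cond_xlogx N \<mu> f {}"
  unfolding Ent_def cond_xlogx_self[OF assms(1)] cond_xlogx_empty[OF assms(2)] ..

lemma block_ent_eq_cond_xlogx:
  assumes "\<forall>\<sigma>. 0 \<le> \<mu> \<sigma>"
  shows "block_ent n \<mu> B f = cond_xlogx {0..<n} \<mu> f {0..<n} - cond_xlogx {0..<n} \<mu> f ({0..<n} - B)"
proof -
  define N where "N = {0..<n}"
  define T where "T = N - B"
  define G where "G \<tau> = marg N (\<lambda>\<sigma>. \<mu> \<sigma> * xlogx (f \<sigma>)) T \<tau> - fibre_xlogx N \<mu> f T \<tau>" for \<tau>
  have "finite N" "T \<subseteq> N" unfolding N_def T_def by auto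
  have "block_ent n \<mu> B f = (\<Sum>\<tau>\<in>supp T (marg N \<mu> T). G \<tau>)"
    unfolding block_ent_def N_def[symmetric] T_def[symmetric] G_def
    using marg_mult_Ent_cond[OF \<open>finite N\<close> assms] by simp
  also have "\<dots> = (\<Sum>\<tau>\<in>cube T. G \<tau>)"
    using marg_mult_eq_0[OF \<open>finite N\<close> assms] finite_subset[OF \<open>T \<subseteq> N\<close> \<open>finite N\<close>]
    by (intro sum.mono_neutral_left) (auto simp: supp_def G_def fibre_xlogx_def)
  also have "\<dots> = cond_xlogx N \<mu> f N - cond_xlogx N \<mu> f T"
    using sum_cube_marg_1[OF \<open>finite N\<close> \<open>T \<subseteq> N\<close>]
    unfolding cond_xlogx_self[OF \<open>finite N\<close>] cond_xlogx_def[of N \<mu> f T]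
    by (simp add: G_def sum_subtractf expect_def)
  finally show ?thesis unfolding N_def T_def .
qed

section \<open>Entropic independence from product domination\<close>

lemma gen_poly_marg:
  assumes "finite N" "U \<subseteq> N"
  shows "gen_poly U (marg N p U) y = expect N p (\<lambda>\<sigma>. \<Prod>i\<in>{i\<in>U. \<sigma> i = 1}. y i)"
  unfolding gen_poly_def expect_def sum_cube_marg[OF assms]
  by (intro sum.cong refl arg_cong2[where f="(*)"] prod.cong) auto

lemma site_prob_marg:
  assumes "finite N" "U \<subseteq> N" "i \<in> U"
  shows "site_prob U (marg N p U) i s = site_prob N p i s"
proof -
  have "site_prob U (marg N p U) i s = (\<Sum>\<eta>\<in>cube U. marg N p U \<eta> * (if \<eta> i = s then 1 else 0))"
    unfolding site_prob_def by (intro sum.cong) auto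
  also have "\<dots> = site_prob N p i s"
    unfolding sum_cube_marg[OF assms(1,2)] site_prob_def using assms(3) by (intro sum.cong) auto
  finally show ?thesis .
qed

text \<open>Factor out \<Prod>_i y_i(-1)^\<alpha> and apply the definition at z_i = y_i(+1)/y_i(-1).\<close>
lemma product_dominated_tilt:
  assumes N: "finite N" "U \<subseteq> N" and p: "\<forall>\<sigma>. 0 \<le> p \<sigma>" and "0 < \<alpha>"
    and PD: "product_dominated U (marg N p U) (1 / \<alpha>)"
    and y: "\<forall>i\<in>U. 0 < y i 1 \<and> 0 < y i (-1)"
  shows "expect N p (\<lambda>\<sigma>. \<Prod>i\<in>U. y i (\<sigma> i) powr \<alpha>)
    \<le> (\<Prod>i\<in>U. site_prob N p i 1 * y i 1 + site_prob N p i (-1) * y i (-1)) powr \<alpha>"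
proof -
  define z where "z i = y i 1 / y i (-1)" for i
  define W where "W = (\<Prod>i\<in>U. y i (-1) powr \<alpha>)"
  define G where "G = gen_poly U (marg N p U) (\<lambda>i. z i powr \<alpha>)"
  define R where "R = (\<Prod>i\<in>U. site_prob N p i 1 * z i + site_prob N p i (-1))"
  have fU: "finite U" using N finite_subset by blast
  have tilt: "(\<Prod>i\<in>U. y i (\<sigma> i) powr \<alpha>) = W * (\<Prod>i\<in>{i\<in>U. \<sigma> i = 1}. z i powr \<alpha>)"
    if "\<sigma> \<in> cube N" for \<sigma>
  proof -
    have "y i (\<sigma> i) powr \<alpha> = y i (-1) powr \<alpha> * (if \<sigma> i = 1 then z i powr \<alpha> else 1)" if "i \<in> U" for i
      using cube_coord[OF \<open>\<sigma> \<in> cube N\<close>, of i] y \<open>i \<in> U\<close> \<open>U \<subseteq> N\<close>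
      by (auto simp: z_def powr_divide)
    then have "(\<Prod>i\<in>U. y i (\<sigma> i) powr \<alpha>) = W * (\<Prod>i\<in>U. if \<sigma> i = 1 then z i powr \<alpha> else 1)"
      unfolding W_def prod.distrib[symmetric] by (rule prod.cong[OF refl])
    then show ?thesis using fU by (simp add: prod.inter_filter)
  qed
  have lhs: "expect N p (\<lambda>\<sigma>. \<Prod>i\<in>U. y i (\<sigma> i) powr \<alpha>) = W * G"
    unfolding G_def gen_poly_marg[OF N] expect_def sum_distrib_left
    by (intro sum.cong refl) (simp add: tilt)
  have "\<forall>i\<in>U. 0 < z i" using y by (simp add: z_def)
  then have "G powr (1 / \<alpha>)
      \<le> (\<Prod>i\<in>U. site_prob U (marg N p U) i 1 * z i + site_prob U (marg N p U) i (-1))"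
    using PD unfolding product_dominated_def G_def by simp
  also have "\<dots> = R"
    unfolding R_def by (intro prod.cong refl) (simp add: site_prob_marg[OF N])
  finally have "G powr (1 / \<alpha>) \<le> R" .
  then have "G \<le> R powr \<alpha>"
    using \<open>0 < \<alpha>\<close> powr_mono2[of \<alpha> "G powr (1 / \<alpha>)" R]
    by (simp add: G_def gen_poly_def powr_powr sum_nonneg p)
  then have "W * G \<le> W * R powr \<alpha>" by (simp add: W_def mult_left_mono prod_nonneg)
  also have "W * R powr \<alpha> = ((\<Prod>i\<in>U. y i (-1)) * R) powr \<alpha>"
    unfolding W_def by (simp add: prod_powr_distrib powr_mult)
  also have "(\<Prod>i\<in>U. y i (-1)) * R = (\<Prod>i\<in>U. site_prob N p i 1 * y i 1 + site_prob N p i (-1) * y i (-1))"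
    unfolding R_def prod.distrib[symmetric] using y by (intro prod.cong refl) (auto simp: z_def field_simps)
  finally show ?thesis unfolding lhs .
qed

lemma site_weight_pos:
  assumes "\<sigma> \<in> cube N" "i \<in> N" "0 < y i 1" "0 < y i (-1)"
  shows "0 < y i (\<sigma> i)"
  using cube_coord[OF assms(1,2)] assms(3,4) by auto

lemma expect_mult_ln_tilt:
  assumes "U \<subseteq> N" "finite U" and y: "\<forall>i\<in>U. 0 < y i 1 \<and> 0 < y i (-1)"
  shows "expect N p (\<lambda>\<sigma>. f \<sigma> * ln (\<Prod>i\<in>U. y i (\<sigma> i) powr \<alpha>))
    = \<alpha> * (\<Sum>i\<in>U. site_prob N (\<lambda>\<sigma>. p \<sigma> * f \<sigma>) i 1 * ln (y i 1)
                 + site_prob N (\<lambda>\<sigma>. p \<sigma> * f \<sigma>) i (-1) * ln (y i (-1)))"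
proof -
  have y_pos: "0 < y i (\<sigma> i)" if "\<sigma> \<in> cube N" "i \<in> U" for \<sigma> i
    using site_weight_pos[OF that(1)] y that(2) assms(1) by blast
  have site: "(\<Sum>\<sigma>\<in>cube N. p \<sigma> * f \<sigma> * ln (y i (\<sigma> i)))
      = site_prob N (\<lambda>\<sigma>. p \<sigma> * f \<sigma>) i 1 * ln (y i 1) + site_prob N (\<lambda>\<sigma>. p \<sigma> * f \<sigma>) i (-1) * ln (y i (-1))"
    if "i \<in> U" for i
    unfolding site_prob_def sum_distrib_right sum.distrib[symmetric]
    using cube_coord[of _ N i] that assms(1) by (intro sum.cong refl) auto
  have "expect N p (\<lambda>\<sigma>. f \<sigma> * ln (\<Prod>i\<in>U. y i (\<sigma> i) powr \<alpha>))
      = (\<Sum>\<sigma>\<in>cube N. \<Sum>i\<in>U. \<alpha> * (p \<sigma> * f \<sigma> * ln (y i (\<sigma> i))))"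
  proof -
    have "ln (\<Prod>i\<in>U. y i (\<sigma> i) powr \<alpha>) = (\<Sum>i\<in>U. \<alpha> * ln (y i (\<sigma> i)))" if "\<sigma> \<in> cube N" for \<sigma>
      using y_pos[OF that] by (subst ln_prod[OF assms(2)]) (force simp: ln_powr)+
    then show ?thesis unfolding expect_def by (intro sum.cong refl) (simp add: sum_distrib_left mult_ac)
  qed
  also have "\<dots> = \<alpha> * (\<Sum>i\<in>U. \<Sum>\<sigma>\<in>cube N. p \<sigma> * f \<sigma> * ln (y i (\<sigma> i)))"
    by (subst sum.swap) (simp add: sum_distrib_left)
  finally show ?thesis by (simp add: site)
qed

lemma tilt_pos:
  fixes y :: "nat \<Rightarrow> int \<Rightarrow> real"
  assumes "\<sigma> \<in> cube N" "U \<subseteq> N" "\<forall>i\<in>U. 0 < y i 1 \<and> 0 < y i (-1)"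
  shows "0 < (\<Prod>i\<in>U. y i (\<sigma> i) powr \<alpha>)"
proof -
  have "0 < y i (\<sigma> i)" if "i \<in> U" for i
    using site_weight_pos[OF assms(1)] assms(2,3) that by blast
  then show ?thesis by (intro prod_pos ballI) (metis powr_gt_zero order_less_irrefl)
qed

lemma ln_expect_tilt_le:
  fixes y :: "nat \<Rightarrow> int \<Rightarrow> real"
  assumes N: "finite N" "U \<subseteq> N" and p: "\<forall>\<sigma>. 0 \<le> p \<sigma>" "sum p (cube N) = 1" and "0 < \<alpha>"
    and PD: "product_dominated U (marg N p U) (1 / \<alpha>)"
    and y: "\<forall>i\<in>U. 0 < y i 1 \<and> 0 < y i (-1)"
  shows "ln (expect N p (\<lambda>\<sigma>. \<Prod>i\<in>U. y i (\<sigma> i) powr \<alpha>))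
    \<le> \<alpha> * (\<Sum>i\<in>U. ln (site_prob N p i 1 * y i 1 + site_prob N p i (-1) * y i (-1)))"
proof -
  define Z where "Z i = site_prob N p i 1 * y i 1 + site_prob N p i (-1) * y i (-1)" for i
  have "finite U" using N finite_subset by blast
  have Z_pos: "0 < Z i" if "i \<in> U" for i
  proof -
    have "site_prob N p i 1 + site_prob N p i (-1) = 1"
      using site_prob_sum[of i N p] that N(2) p(2) by auto
    then show ?thesis
      using y that site_prob_nonneg[of N p i] p(1) unfolding Z_def
      by (smt (verit) mult_nonneg_nonneg mult_pos_pos)
  qed
  obtain \<sigma>\<^sub>0 where "\<sigma>\<^sub>0 \<in> cube N" "0 < p \<sigma>\<^sub>0"
    using p by (metis less_eq_real_def sum.neutral zero_neq_one)
  then have "0 < expect N p (\<lambda>\<sigma>. \<Prod>i\<in>U. y i (\<sigma> i) powr \<alpha>)"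
    unfolding expect_def using N(1) p(1) tilt_pos[OF _ N(2) y, of _ \<alpha>]
    by (intro sum_pos2[of _ \<sigma>\<^sub>0]) (simp_all add: less_imp_le)
  moreover have "expect N p (\<lambda>\<sigma>. \<Prod>i\<in>U. y i (\<sigma> i) powr \<alpha>) \<le> (\<Prod>i\<in>U. Z i) powr \<alpha>"
    unfolding Z_def by (rule product_dominated_tilt[OF N p(1) \<open>0 < \<alpha>\<close> PD y])
  ultimately have "ln (expect N p (\<lambda>\<sigma>. \<Prod>i\<in>U. y i (\<sigma> i) powr \<alpha>)) \<le> ln ((\<Prod>i\<in>U. Z i) powr \<alpha>)"
    by (intro ln_mono) auto
  also have "\<dots> = \<alpha> * (\<Sum>i\<in>U. ln (Z i))"
    using Z_pos prod_pos[of U Z] ln_prod[OF \<open>finite U\<close>, of Z] by (simp add: ln_powr less_imp_neq[symmetric])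
  finally show ?thesis unfolding Z_def .
qed

lemma Ent_ge_site_tilts:
  fixes y :: "nat \<Rightarrow> int \<Rightarrow> real"
  assumes N: "finite N" "U \<subseteq> N" and p: "\<forall>\<sigma>. 0 \<le> p \<sigma>" "sum p (cube N) = 1"
    and f: "\<forall>\<sigma>\<in>cube N. 0 < p \<sigma> \<longrightarrow> 0 \<le> f \<sigma>" and "0 < \<alpha>"
    and PD: "product_dominated U (marg N p U) (1 / \<alpha>)"
    and y: "\<forall>i\<in>U. 0 < y i 1 \<and> 0 < y i (-1)"
  shows "\<alpha> * (\<Sum>i\<in>U. site_prob N (\<lambda>\<sigma>. p \<sigma> * f \<sigma>) i 1 * ln (y i 1)
                  + site_prob N (\<lambda>\<sigma>. p \<sigma> * f \<sigma>) i (-1) * ln (y i (-1))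
                  - expect N p f * ln (site_prob N p i 1 * y i 1 + site_prob N p i (-1) * y i (-1)))
    \<le> Ent N p f"
proof -
  define h where "h \<sigma> = (\<Prod>i\<in>U. y i (\<sigma> i) powr \<alpha>)" for \<sigma>
  define Z where "Z i = site_prob N p i 1 * y i 1 + site_prob N p i (-1) * y i (-1)" for i
  define E where "E = expect N p f"
  have "finite U" using N finite_subset by blast
  have "0 \<le> E" unfolding E_def expect_def using p f
    by (intro sum_nonneg) (metis less_eq_real_def mult_nonneg_nonneg mult_zero_left)
  with ln_expect_tilt_le[OF N p \<open>0 < \<alpha>\<close> PD y]
  have "E * ln (expect N p h) \<le> E * (\<alpha> * (\<Sum>i\<in>U. ln (Z i)))"
    unfolding h_def Z_def by (rule mult_left_mono)
  moreover have "expect N p (\<lambda>\<sigma>. f \<sigma> * ln (h \<sigma>)) \<le> Ent N p f + E * ln (expect N p h)"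
    unfolding E_def h_def using Ent_variational[OF N(1) _ f] p(1) tilt_pos[OF _ N(2) y] by simp
  ultimately show ?thesis
    unfolding h_def expect_mult_ln_tilt[OF N(2) \<open>finite U\<close> y] E_def[symmetric] Z_def[symmetric]
    by (simp add: sum_subtractf right_diff_distrib sum_distrib_left mult_ac)
qed

text \<open>The optimal tilt a / (E b) may vanish; the perturbation by \<epsilon> keeps it positive.\<close>
definition eps_tilt :: "real \<Rightarrow> real \<Rightarrow> real \<Rightarrow> real \<Rightarrow> real" where
  "eps_tilt \<epsilon> E a b = (if b = 0 then 1 else (a / E + \<epsilon> * b) / b)"

lemma eps_tilt_pos: "0 \<le> a \<Longrightarrow> 0 \<le> b \<Longrightarrow> 0 < E \<Longrightarrow> 0 < \<epsilon> \<Longrightarrow> 0 < eps_tilt \<epsilon> E a b"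
  unfolding eps_tilt_def by (auto intro!: divide_pos_pos add_nonneg_pos)

lemma two_point_eps_tilt:
  fixes P Q :: "int \<Rightarrow> real"
  assumes "0 < E" "0 < \<epsilon>" "P 1 + P (-1) = E" "Q 1 + Q (-1) = 1"
    and P_nonneg: "\<And>s. 0 \<le> P s" and Q_nonneg: "\<And>s. 0 \<le> Q s" and P_0: "\<And>s. Q s = 0 \<Longrightarrow> P s = 0"
  defines "y s \<equiv> eps_tilt \<epsilon> E (P s) (Q s)"
  shows "persp_xlogx (P 1) (Q 1) + persp_xlogx (P (-1)) (Q (-1)) - xlogx E
      \<le> P 1 * ln (y 1) + P (-1) * ln (y (-1)) - E * ln (Q 1 * y 1 + Q (-1) * y (-1)) + E * \<epsilon>"
proof -
  have "Q s * y s = P s / E + \<epsilon> * Q s" for s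
    using P_0[of s] unfolding y_def eps_tilt_def by auto
  then have "Q 1 * y 1 + Q (-1) * y (-1) = (P 1 + P (-1)) / E + \<epsilon> * (Q 1 + Q (-1))"
    by (simp add: add_divide_distrib algebra_simps)
  then have Z: "Q 1 * y 1 + Q (-1) * y (-1) = 1 + \<epsilon>" using assms(1,3,4) by simp
  have site: "persp_xlogx (P s) (Q s) - P s * ln E \<le> P s * ln (y s)" for s
  proof (rule persp_xlogx_le_mult_ln[OF P_nonneg \<open>0 < E\<close>])
    show "0 < Q s \<or> P s = 0" using P_0 Q_nonneg[of s] by force
    show "P s / (E * Q s) \<le> y s"
      unfolding y_def eps_tilt_def using P_nonneg[of s] Q_nonneg[of s] assms(1,2)
      by (auto simp: field_simps)
  qed
  have "xlogx E = P 1 * ln E + P (-1) * ln E"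
    using assms(3) by (simp add: xlogx_eq distrib_right[symmetric])
  moreover have "E * ln (1 + \<epsilon>) \<le> E * \<epsilon>"
    using assms(1,2) by (simp add: ln_add_one_self_le_self)
  ultimately show ?thesis using site[of 1] site[of "-1"] unfolding Z by linarith
qed

lemma entropic_independence:
  assumes N: "finite N" "U \<subseteq> N" and p: "\<forall>\<sigma>. 0 \<le> p \<sigma>" "sum p (cube N) = 1"
    and f: "\<forall>\<sigma>\<in>cube N. 0 < p \<sigma> \<longrightarrow> 0 \<le> f \<sigma>" and "0 < \<alpha>"
    and PD: "product_dominated U (marg N p U) (1 / \<alpha>)"
  shows "\<alpha> * (\<Sum>i\<in>U. persp_xlogx (site_prob N (\<lambda>\<sigma>. p \<sigma> * f \<sigma>) i 1) (site_prob N p i 1)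
                  + persp_xlogx (site_prob N (\<lambda>\<sigma>. p \<sigma> * f \<sigma>) i (-1)) (site_prob N p i (-1))
                  - xlogx (expect N p f))
    \<le> Ent N p f"
proof -
  define P where "P i s = site_prob N (\<lambda>\<sigma>. p \<sigma> * f \<sigma>) i s" for i s
  define Q where "Q i s = site_prob N p i s" for i s
  define E where "E = expect N p f"
  define L where "L = (\<Sum>i\<in>U. persp_xlogx (P i 1) (Q i 1) + persp_xlogx (P i (-1)) (Q i (-1)) - xlogx E)"
  have pf: "\<forall>\<sigma>\<in>cube N. 0 \<le> p \<sigma> * f \<sigma>"
    using p(1) f by (metis less_eq_real_def mult_nonneg_nonneg mult_zero_left)
  have P_nonneg: "0 \<le> P i s" for i s unfolding P_def using site_prob_nonneg[OF pf] .
  have Q_nonneg: "0 \<le> Q i s" for i s unfolding Q_def using site_prob_nonneg p(1) by blast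
  have P_sum: "P i 1 + P i (-1) = E" and Q_sum: "Q i 1 + Q i (-1) = 1" if "i \<in> U" for i
    unfolding P_def Q_def E_def expect_def using site_prob_sum that N(2) p(2) by auto
  have P_0: "P i s = 0" if "Q i s = 0" for i s
    using site_prob_mult_eq_0[OF N(1) p(1)] that unfolding P_def Q_def by blast
  have "0 \<le> E" unfolding E_def expect_def using pf by (simp add: sum_nonneg)
  have "\<alpha> * L \<le> Ent N p f"
  proof (cases "E = 0")
    case True
    then have "P i 1 = 0" "P i (-1) = 0" if "i \<in> U" for i
      using P_sum[OF that] P_nonneg[of i 1] P_nonneg[of i "-1"] by auto
    then have "L = 0" unfolding L_def using True by (intro sum.neutral) (simp add: xlogx_def)
    then show ?thesis using Ent_nonneg[OF N(1) _ p(2) f] p(1) by simp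
  next
    case False
    then have "0 < E" using \<open>0 \<le> E\<close> by simp
    show ?thesis
    proof (rule field_le_epsilon)
      fix e :: real assume "0 < e"
      define K where "K = \<alpha> * real (card U) * E"
      define \<epsilon> where "\<epsilon> = e / (K + 1)"
      have "0 \<le> K" unfolding K_def using \<open>0 < \<alpha>\<close> \<open>0 < E\<close> by simp
      then have "0 < \<epsilon>" "K * \<epsilon> \<le> e" unfolding \<epsilon>_def using \<open>0 < e\<close> by (simp_all add: field_simps)
      define y where "y i s = eps_tilt \<epsilon> E (P i s) (Q i s)" for i s
      define gain where "gain i = P i 1 * ln (y i 1) + P i (-1) * ln (y i (-1))
        - E * ln (Q i 1 * y i 1 + Q i (-1) * y i (-1))" for i
      have "L \<le> (\<Sum>i\<in>U. gain i + E * \<epsilon>)"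
        unfolding L_def
      proof (rule sum_mono)
        fix i assume "i \<in> U"
        from two_point_eps_tilt[where P="P i" and Q="Q i", OF \<open>0 < E\<close> \<open>0 < \<epsilon>\<close>
            P_sum[OF \<open>i \<in> U\<close>] Q_sum[OF \<open>i \<in> U\<close>] P_nonneg Q_nonneg P_0]
        show "persp_xlogx (P i 1) (Q i 1) + persp_xlogx (P i (-1)) (Q i (-1)) - xlogx E \<le> gain i + E * \<epsilon>"
          unfolding gain_def y_def .
      qed
      also have "\<dots> = (\<Sum>i\<in>U. gain i) + real (card U) * E * \<epsilon>"
        by (simp add: sum.distrib)
      finally have "\<alpha> * L \<le> \<alpha> * ((\<Sum>i\<in>U. gain i) + real (card U) * E * \<epsilon>)"
        using \<open>0 < \<alpha>\<close> by (simp add: mult_left_mono)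
      also have "\<dots> = \<alpha> * (\<Sum>i\<in>U. gain i) + K * \<epsilon>"
        unfolding K_def by (simp add: distrib_left mult_ac)
      also have "\<dots> \<le> Ent N p f + K * \<epsilon>"
        using Ent_ge_site_tilts[OF N p f \<open>0 < \<alpha>\<close> PD, of y] eps_tilt_pos P_nonneg Q_nonneg \<open>0 < E\<close> \<open>0 < \<epsilon>\<close>
        unfolding gain_def y_def P_def Q_def E_def by simp
      finally show "\<alpha> * L \<le> Ent N p f + e" using \<open>K * \<epsilon> \<le> e\<close> by simp
    qed
  qed
  then show ?thesis unfolding L_def P_def Q_def E_def .
qed

lemma entropic_independence_fibre:
  assumes N: "finite N" "T \<subseteq> N" and \<mu>: "\<forall>\<sigma>. 0 \<le> \<mu> \<sigma>"
    and f: "\<forall>\<sigma>\<in>cube N. 0 < \<mu> \<sigma> \<longrightarrow> 0 \<le> f \<sigma>" and "0 < \<alpha>" and \<tau>: "\<tau> \<in> cube T"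
    and PD: "marg N \<mu> T \<tau> \<noteq> 0 \<Longrightarrow> product_dominated (N - T) (marg N (cond N \<mu> T \<tau>) (N - T)) (1 / \<alpha>)"
  shows "\<alpha> * (\<Sum>i\<in>N - T. fibre_xlogx N \<mu> f (insert i T) (\<tau>(i := 1))
                      + fibre_xlogx N \<mu> f (insert i T) (\<tau>(i := -1)) - fibre_xlogx N \<mu> f T \<tau>)
    \<le> marg N (\<lambda>\<sigma>. \<mu> \<sigma> * xlogx (f \<sigma>)) T \<tau> - fibre_xlogx N \<mu> f T \<tau>"
proof (cases "marg N \<mu> T \<tau> = 0")
  case True
  have "marg N \<mu> (insert i T) (\<tau>(i := s)) = 0" if "i \<notin> T" for i s
    unfolding marg_insert[OF \<tau> that] using marg_eq_0_fibre[OF N(1) \<mu> True]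
    by (intro sum.neutral) auto
  then show ?thesis using True marg_mult_eq_0[OF N(1) \<mu> True] by (simp add: fibre_xlogx_def)
next
  case False
  define M where "M = marg N \<mu> T \<tau>"
  define p where "p = cond N \<mu> T \<tau>"
  have "0 < M" using False marg_nonneg[OF \<mu>] unfolding M_def by (simp add: order_less_le)
  have p_nonneg: "\<forall>\<sigma>. 0 \<le> p \<sigma>" unfolding p_def cond_def using \<mu> \<open>0 < M\<close> M_def by simp
  have "sum p (cube N) = 1"
    using expect_cond[of N \<mu> T \<tau> "\<lambda>_. 1"] False unfolding p_def expect_def by simp
  moreover have "\<forall>\<sigma>\<in>cube N. 0 < p \<sigma> \<longrightarrow> 0 \<le> f \<sigma>"
    using f \<open>0 < M\<close> unfolding p_def cond_def M_def by (auto simp: zero_less_divide_iff)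
  ultimately have EI: "\<alpha> * (\<Sum>i\<in>N - T. persp_xlogx (site_prob N (\<lambda>\<sigma>. p \<sigma> * f \<sigma>) i 1) (site_prob N p i 1)
                  + persp_xlogx (site_prob N (\<lambda>\<sigma>. p \<sigma> * f \<sigma>) i (-1)) (site_prob N p i (-1))
                  - xlogx (expect N p f)) \<le> Ent N p f"
    using entropic_independence[OF N(1) _ p_nonneg _ _ \<open>0 < \<alpha>\<close>] PD[OF False] unfolding p_def by blast
  have site: "M * persp_xlogx (site_prob N (\<lambda>\<sigma>. p \<sigma> * f \<sigma>) i s) (site_prob N p i s)
      = fibre_xlogx N \<mu> f (insert i T) (\<tau>(i := s))" if "i \<in> N - T" for i s
    using marg_insert_eq_site_prob_cond[OF \<tau> _ False, of i f s] marg_insert_eq_site_prob_cond[OF \<tau> _ False, of i "\<lambda>_. 1" s]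
      that persp_xlogx_scale[OF \<open>0 < M\<close>]
    unfolding fibre_xlogx_def M_def p_def by simp
  have mean: "M * xlogx (expect N p f) = fibre_xlogx N \<mu> f T \<tau>"
    using persp_xlogx_scale[OF \<open>0 < M\<close>, of "expect N p f" 1] \<open>0 < M\<close>
    unfolding fibre_xlogx_def p_def expect_cond M_def by simp
  have "M * (\<alpha> * (\<Sum>i\<in>N - T. persp_xlogx (site_prob N (\<lambda>\<sigma>. p \<sigma> * f \<sigma>) i 1) (site_prob N p i 1)
                  + persp_xlogx (site_prob N (\<lambda>\<sigma>. p \<sigma> * f \<sigma>) i (-1)) (site_prob N p i (-1))
                  - xlogx (expect N p f)))
      = \<alpha> * (\<Sum>i\<in>N - T. fibre_xlogx N \<mu> f (insert i T) (\<tau>(i := 1))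
                      + fibre_xlogx N \<mu> f (insert i T) (\<tau>(i := -1)) - fibre_xlogx N \<mu> f T \<tau>)"
    unfolding mult.left_commute[of M \<alpha>] sum_distrib_left
    by (simp add: site mean right_diff_distrib distrib_left)
  moreover have "M * Ent N p f = marg N (\<lambda>\<sigma>. \<mu> \<sigma> * xlogx (f \<sigma>)) T \<tau> - fibre_xlogx N \<mu> f T \<tau>"
    unfolding M_def p_def by (rule marg_mult_Ent_cond[OF N(1) \<mu>])
  ultimately show ?thesis using mult_left_mono[OF EI, of M] \<open>0 < M\<close> by linarith
qed

lemma cond_xlogx_increments_le:
  assumes N: "finite N" "T \<subseteq> N" and \<mu>: "\<forall>\<sigma>. 0 \<le> \<mu> \<sigma>"
    and f: "\<forall>\<sigma>\<in>cube N. 0 < \<mu> \<sigma> \<longrightarrow> 0 \<le> f \<sigma>" and "0 < \<alpha>"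
    and PD: "\<forall>\<tau>\<in>supp T (marg N \<mu> T). product_dominated (N - T) (marg N (cond N \<mu> T \<tau>) (N - T)) (1 / \<alpha>)"
  shows "(\<Sum>i\<in>N - T. cond_xlogx N \<mu> f (insert i T) - cond_xlogx N \<mu> f T)
    \<le> 1 / \<alpha> * (cond_xlogx N \<mu> f N - cond_xlogx N \<mu> f T)"
proof -
  define F where "F = fibre_xlogx N \<mu> f"
  have "finite T" using N finite_subset by blast
  have "(\<Sum>i\<in>N - T. cond_xlogx N \<mu> f (insert i T) - cond_xlogx N \<mu> f T)
      = (\<Sum>i\<in>N - T. \<Sum>\<tau>\<in>cube T. F (insert i T) (\<tau>(i := 1)) + F (insert i T) (\<tau>(i := -1)) - F T \<tau>)"
    unfolding cond_xlogx_def F_def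
    by (intro sum.cong refl) (simp add: sum_subtractf sum_cube_insert[OF \<open>finite T\<close>])
  also have "\<dots> = (\<Sum>\<tau>\<in>cube T. \<Sum>i\<in>N - T. F (insert i T) (\<tau>(i := 1)) + F (insert i T) (\<tau>(i := -1)) - F T \<tau>)"
    by (rule sum.swap)
  finally have "\<alpha> * (\<Sum>i\<in>N - T. cond_xlogx N \<mu> f (insert i T) - cond_xlogx N \<mu> f T)
      = (\<Sum>\<tau>\<in>cube T. \<alpha> * (\<Sum>i\<in>N - T. F (insert i T) (\<tau>(i := 1)) + F (insert i T) (\<tau>(i := -1)) - F T \<tau>))"
    by (simp add: sum_distrib_left)
  also have "\<dots> \<le> (\<Sum>\<tau>\<in>cube T. marg N (\<lambda>\<sigma>. \<mu> \<sigma> * xlogx (f \<sigma>)) T \<tau> - F T \<tau>)"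
    unfolding F_def using entropic_independence_fibre[OF N \<mu> f \<open>0 < \<alpha>\<close>] PD
    by (intro sum_mono) (simp add: supp_def)
  also have "\<dots> = cond_xlogx N \<mu> f N - cond_xlogx N \<mu> f T"
    unfolding cond_xlogx_self[OF N(1)] expect_def cond_xlogx_def[of N \<mu> f T] F_def
    by (simp add: sum_subtractf sum_cube_marg_1[OF N])
  finally show ?thesis using \<open>0 < \<alpha>\<close> by (simp add: field_simps)
qed

section \<open>Averaging over levels\<close>

lemma power_div_fact_le_exp:
  fixes x :: real
  assumes "0 \<le> x"
  shows "x ^ r / fact r \<le> exp x"
proof -
  have "(\<Sum>n\<in>{r}. x ^ n /\<^sub>R fact n) \<le> (\<Sum>n. x ^ n /\<^sub>R fact n)"
    using exp_converges[of x] assms by (intro sum_le_suminf) (auto simp: sums_iff)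
  then show ?thesis using exp_converges[of x] by (simp add: sums_iff divide_inverse_commute)
qed

lemma power_div_exp_le_fact: "(real r / exp 1) ^ r \<le> fact r"
proof -
  have "real r ^ r \<le> exp (real r) * fact r"
    using power_div_fact_le_exp[of "real r" r] by (simp add: divide_le_eq)
  moreover have "exp (real r) = exp 1 ^ r" by (metis exp_of_nat_mult mult.right_neutral)
  ultimately show ?thesis by (simp add: power_divide divide_le_eq mult.commute)
qed


lemma power_le_binomial_ratio:
  assumes "1 \<le> r" "r \<le> l" "l \<le> m"
  shows "(real l / (exp 1 * real m)) ^ r \<le> real (l choose r) / real (m choose r)"
proof -
  have "0 < real (m choose r)" using assms by simp
  have "(real l / (exp 1 * real m)) ^ r = (real l / real r) ^ r * (real r / exp 1) ^ r / real m ^ r"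
    using assms by (simp add: power_divide power_mult_distrib field_simps)
  also have "\<dots> \<le> real (l choose r) * fact r / real m ^ r"
    using binomial_ge_n_over_k_pow_k[of r l] power_div_exp_le_fact[of r] assms
    by (intro divide_right_mono mult_mono) auto
  also have "\<dots> \<le> real (l choose r) * fact r / (real (m choose r) * fact r)"
  proof -
    have "real (m choose r) * fact r \<le> real m ^ r"
      using binomial_fact_pow[of m r] by (metis of_nat_fact of_nat_le_iff of_nat_mult of_nat_power)
    then show ?thesis using \<open>0 < real (m choose r)\<close> by (intro divide_left_mono mult_pos_pos) auto
  qed
  finally show ?thesis by simp
qed

text \<open>Each factor satisfies 1 - c/j \<ge> 1 - r/j = (j - r)/j for r = \<lceil>c\<rceil>, and these telescope to
  binomial ratios.\<close>
lemma binomial_ratio_le_prod: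
  fixes c :: real
  assumes "0 < c" "c \<le> real l" "l \<le> m"
  shows "real (l choose nat \<lceil>c\<rceil>) / real (m choose nat \<lceil>c\<rceil>) \<le> (\<Prod>j\<in>{l<..m}. 1 - c / real j)"
  using assms(3)
proof (induction m rule: dec_induct)
  case base
  have "nat \<lceil>c\<rceil> \<le> l" using assms by linarith
  then show ?case by simp
next
  case (step m)
  define r where "r = nat \<lceil>c\<rceil>"
  have "r \<le> l" "c \<le> real r" unfolding r_def using assms by linarith+
  have "real (Suc m - r) / real (Suc m) = 1 - real r / real (Suc m)"
    using \<open>r \<le> l\<close> step.hyps by (simp add: of_nat_diff diff_divide_distrib)
  then have factor: "real (Suc m - r) / real (Suc m) \<le> 1 - c / real (Suc m)"
    using \<open>c \<le> real r\<close> by (simp add: divide_right_mono)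
  have "real (Suc m - r) * real (Suc m choose r) = real (Suc m) * real (m choose r)"
    using binomial_absorb_comp[of "Suc m" r] by (metis diff_Suc_1 of_nat_mult)
  moreover have "0 < real (Suc m - r)" using \<open>r \<le> l\<close> step.hyps by simp
  ultimately have "real (l choose r) / real (Suc m choose r)
      = real (Suc m - r) / real (Suc m) * (real (l choose r) / real (m choose r))"
      by (metis (no_types) mult_divide_mult_cancel_left_if times_divide_times_eq less_irrefl)
  also have "\<dots> \<le> (1 - c / real (Suc m)) * (\<Prod>j\<in>{l<..m}. 1 - c / real j)"
    using step.IH factor assms(2) step.hyps unfolding r_def[symmetric] by (intro mult_mono) auto
  also have "\<dots> = (\<Prod>j\<in>{l<..Suc m}. 1 - c / real j)"
  proof -
    have "{l<..Suc m} = insert (Suc m) {l<..m}" using step.hyps by auto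
    then show ?thesis by simp
  qed
  finally show ?case unfolding r_def .
qed

lemma powr_le_prod_one_minus:
  fixes c :: real
  assumes "0 < c" "c \<le> real l" "l \<le> m"
  shows "(real l / (exp 1 * real m)) powr (c + 1) \<le> (\<Prod>j\<in>{l<..m}. 1 - c / real j)"
proof -
  define r where "r = nat \<lceil>c\<rceil>"
  define x where "x = real l / (exp 1 * real m)"
  have "1 \<le> r" "r \<le> l" "real r \<le> c + 1" unfolding r_def using assms by linarith+
  have "0 < x" unfolding x_def using assms by simp
  have "real l \<le> exp 1 * real m"
    using assms(3) mult_right_mono[of 1 "exp 1" "real m"] by simp
  moreover have "0 < m" using assms by simp
  ultimately have "x \<le> 1" unfolding x_def by (simp add: divide_le_eq_1)
  have "x powr (c + 1) \<le> x powr real r"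
    using \<open>real r \<le> c + 1\<close> \<open>0 < x\<close> \<open>x \<le> 1\<close> by (intro powr_mono') auto
  also have "\<dots> = x ^ r" using \<open>0 < x\<close> by (simp add: powr_realpow)
  also have "\<dots> \<le> real (l choose r) / real (m choose r)"
    unfolding x_def using power_le_binomial_ratio[OF \<open>1 \<le> r\<close> \<open>r \<le> l\<close> assms(3)] .
  also have "\<dots> \<le> (\<Prod>j\<in>{l<..m}. 1 - c / real j)"
    unfolding r_def using binomial_ratio_le_prod[OF assms] .
  finally show ?thesis unfolding x_def .
qed

lemma Suc_times_binomial_Suc: "k < n \<Longrightarrow> Suc k * (n choose Suc k) = (n - k) * (n choose k)"
  by (metis Suc_times_binomial_eq Suc_pred binomial_absorb_comp diff_Suc_1 less_nat_zero_code
      mult.commute not_gr_zero)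

lemma sum_subsets_insert:
  fixes A :: "'a set \<Rightarrow> real"
  assumes "finite N"
  shows "(\<Sum>T\<in>{T. T \<subseteq> N \<and> card T = k}. \<Sum>i\<in>N - T. A (insert i T))
       = real (Suc k) * (\<Sum>T\<in>{T. T \<subseteq> N \<and> card T = Suc k}. A T)"
proof -
  have fin: "finite {T. T \<subseteq> N \<and> card T = j}" for j
    using assms by (auto intro: finite_subset[OF _ finite_Collect_subsets])
  have "(\<Sum>T\<in>{T. T \<subseteq> N \<and> card T = k}. \<Sum>i\<in>N - T. A (insert i T))
      = (\<Sum>(T, i)\<in>Sigma {T. T \<subseteq> N \<and> card T = k} (\<lambda>T. N - T). A (insert i T))"
    using fin assms by (intro sum.Sigma) auto
  also have "\<dots> = (\<Sum>(T, i)\<in>Sigma {T. T \<subseteq> N \<and> card T = Suc k} (\<lambda>T. T). A T)"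
    using assms
    by (intro sum.reindex_bij_witness[where j="\<lambda>(T, i). (insert i T, i)" and i="\<lambda>(T, i). (T - {i}, i)"])
       (auto simp: finite_subset card_insert_if card_Diff_singleton)
  also have "\<dots> = (\<Sum>T\<in>{T. T \<subseteq> N \<and> card T = Suc k}. real (Suc k) * A T)"
    using fin assms by (subst sum.Sigma[symmetric]) (auto intro: finite_subset)
  finally show ?thesis by (simp add: sum_distrib_left)
qed

definition level_avg :: "'a set \<Rightarrow> ('a set \<Rightarrow> real) \<Rightarrow> nat \<Rightarrow> real" where
  "level_avg N A k = (\<Sum>T\<in>{T. T \<subseteq> N \<and> card T = k}. A T) / real (card N choose k)"

lemma level_avg_0: "finite N \<Longrightarrow> level_avg N A 0 = A {}"
proof -
  assume "finite N"
  then have "{T. T \<subseteq> N \<and> card T = 0} = {{}}" by (auto dest: finite_subset)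
  then show ?thesis by (simp add: level_avg_def)
qed

lemma level_avg_complement:
  assumes "finite N" "l \<le> card N"
  shows "level_avg N A (card N - l) = (\<Sum>B\<in>{B. B \<subseteq> N \<and> card B = l}. A (N - B)) / real (card N choose l)"
proof -
  have "(\<Sum>B\<in>{B. B \<subseteq> N \<and> card B = l}. A (N - B)) = (\<Sum>T\<in>{T. T \<subseteq> N \<and> card T = card N - l}. A T)"
    using assms
    by (intro sum.reindex_bij_witness[where i="\<lambda>T. N - T" and j="\<lambda>B. N - B"])
       (auto simp: card_Diff_subset finite_subset)
  then show ?thesis unfolding level_avg_def using binomial_symmetric[OF assms(2)] by simp
qed

lemma level_avg_step:
  fixes A :: "'a set \<Rightarrow> real"
  assumes N: "finite N" "k < card N"
    and incr: "\<And>T. T \<subseteq> N \<Longrightarrow> (\<Sum>i\<in>N - T. A (insert i T) - A T) \<le> c * (A N - A T)"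
  shows "(1 - c / real (card N - k)) * (A N - level_avg N A k) \<le> A N - level_avg N A (Suc k)"
proof -
  define n where "n = card N"
  define S where "S j = (\<Sum>T\<in>{T. T \<subseteq> N \<and> card T = j}. A T)" for j
  define D where "D j = real (n choose j)" for j
  have "0 < D k" "0 < real (n - k)" using N unfolding D_def n_def by simp_all
  have card_level: "card {T. T \<subseteq> N \<and> card T = k} = n choose k"
    unfolding n_def using n_subsets[OF N(1)] by simp
  have "real (Suc k) * S (Suc k) - real (n - k) * S k
      = (\<Sum>T\<in>{T. T \<subseteq> N \<and> card T = k}. (\<Sum>i\<in>N - T. A (insert i T)) - real (n - k) * A T)"
    unfolding S_def sum_subtractf sum_subsets_insert[OF N(1)] by (simp add: sum_distrib_left)
  also have "\<dots> = (\<Sum>T\<in>{T. T \<subseteq> N \<and> card T = k}. \<Sum>i\<in>N - T. A (insert i T) - A T)"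
    unfolding n_def using N(1)
    by (intro sum.cong refl) (auto simp: sum_subtractf card_Diff_subset finite_subset)
  also have "\<dots> \<le> (\<Sum>T\<in>{T. T \<subseteq> N \<and> card T = k}. c * (A N - A T))"
    using incr by (intro sum_mono) auto
  also have "\<dots> = c * (D k * A N - S k)"
    unfolding S_def D_def sum_distrib_left[symmetric] sum_subtractf by (simp add: card_level)
  finally have "real (Suc k) * S (Suc k) - real (n - k) * S k \<le> c * (D k * A N - S k)" .
  have "real (Suc k) * D (Suc k) = real (n - k) * D k"
    unfolding D_def n_def using Suc_times_binomial_Suc[OF N(2)] by (metis of_nat_mult)
  then have "S (Suc k) / D (Suc k) = real (Suc k) * S (Suc k) / (real (n - k) * D k)"
    by (metis mult_divide_mult_cancel_left_if of_nat_eq_0_iff nat.distinct(1))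
  also have "\<dots> \<le> (real (n - k) * S k + c * (D k * A N - S k)) / (real (n - k) * D k)"
    using \<open>real (Suc k) * S (Suc k) - real (n - k) * S k \<le> c * (D k * A N - S k)\<close>
      \<open>0 < D k\<close> \<open>0 < real (n - k)\<close> by (intro divide_right_mono) auto
  also have "\<dots> = S k / D k + c / real (n - k) * (A N - S k / D k)"
    using \<open>0 < D k\<close> \<open>0 < real (n - k)\<close> by (simp add: field_simps)
  finally have "S (Suc k) / D (Suc k) \<le> S k / D k + c / real (n - k) * (A N - S k / D k)" .
  then show ?thesis unfolding level_avg_def S_def[symmetric] D_def[symmetric] n_def[symmetric]
    by (simp add: algebra_simps)
qed

lemma level_gap_ge_prod:
  fixes A :: "'a set \<Rightarrow> real"
  assumes "finite N" "c \<le> real l" "k \<le> card N - l"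
    and incr: "\<And>T. T \<subseteq> N \<Longrightarrow> (\<Sum>i\<in>N - T. A (insert i T) - A T) \<le> c * (A N - A T)"
  shows "(\<Prod>j\<in>{card N - k<..card N}. 1 - c / real j) * (A N - A {}) \<le> A N - level_avg N A k"
  using assms(3)
proof (induction k)
  case 0
  then show ?case using level_avg_0[OF assms(1)] by simp
next
  case (Suc k)
  define n where "n = card N"
  have "k < n" using Suc.prems unfolding n_def by simp
  have "0 \<le> 1 - c / real (n - k)"
    using assms(2) Suc.prems \<open>k < n\<close> unfolding n_def by (simp add: field_simps)
  have "{n - Suc k<..n} = insert (n - k) {n - k<..n}" using \<open>k < n\<close> by auto
  then have "(\<Prod>j\<in>{n - Suc k<..n}. 1 - c / real j) * (A N - A {})
      = (1 - c / real (n - k)) * ((\<Prod>j\<in>{n - k<..n}. 1 - c / real j) * (A N - A {}))"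
    by simp
  also have "\<dots> \<le> (1 - c / real (n - k)) * (A N - level_avg N A k)"
    using Suc \<open>0 \<le> 1 - c / real (n - k)\<close> unfolding n_def by (intro mult_left_mono) auto
  also have "\<dots> \<le> A N - level_avg N A (Suc k)"
    using level_avg_step[OF assms(1) _ incr] \<open>k < n\<close> unfolding n_def by blast
  finally show ?case unfolding n_def .
qed

lemma uniform_block_bound_of_increments:
  fixes A :: "'a set \<Rightarrow> real" and c :: real
  assumes "finite N" "0 < c" "c \<le> real l" "l \<le> card N" "A {} \<le> A N"
    and incr: "\<And>T. T \<subseteq> N \<Longrightarrow> (\<Sum>i\<in>N - T. A (insert i T) - A T) \<le> c * (A N - A T)"
  shows "A N - A {} \<le> (exp 1 * real (card N) / real l) powr (c + 1) / real (card N choose l)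
                       * (\<Sum>B\<in>{B. B \<subseteq> N \<and> card B = l}. A N - A (N - B))"
proof -
  define n where "n = card N"
  define C where "C = (exp 1 * real n / real l) powr (c + 1)"
  define P where "P = (\<Prod>j\<in>{l<..n}. 1 - c / real j)"
  have "0 < l" using assms(2,3) by linarith
  have "0 < real (n choose l)" "0 < n" using assms(4) \<open>0 < l\<close> unfolding n_def by simp_all
  have "0 < C" unfolding C_def using \<open>0 < l\<close> \<open>0 < n\<close> by simp
  have "C * (real l / (exp 1 * real n)) powr (c + 1) = 1"
    unfolding C_def using \<open>0 < l\<close> \<open>0 < n\<close> by (simp add: powr_mult[symmetric])
  then have "A N - A {} = C * (real l / (exp 1 * real n)) powr (c + 1) * (A N - A {})" by simp
  also have "\<dots> \<le> C * P * (A N - A {})"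
    using powr_le_prod_one_minus[OF assms(2,3,4)] \<open>0 < C\<close> assms(5) unfolding P_def n_def
    by (intro mult_right_mono mult_left_mono) auto
  also have "\<dots> \<le> C * (A N - level_avg N A (n - l))"
    using level_gap_ge_prod[OF assms(1,3) _ incr, of "n - l"] assms(4) \<open>0 < C\<close>
    unfolding P_def n_def by (simp add: mult.assoc mult_left_mono)
  also have "A N - level_avg N A (n - l)
      = (\<Sum>B\<in>{B. B \<subseteq> N \<and> card B = l}. A N - A (N - B)) / real (n choose l)"
    using level_avg_complement[OF assms(1,4)] n_subsets[OF assms(1), of l] \<open>0 < real (n choose l)\<close>
    unfolding n_def by (simp add: sum_subtractf field_simps)
  finally show ?thesis unfolding C_def n_def by simp
qed

theorem lemma2p5:
  fixes n l :: nat and \<mu> :: "(nat \<Rightarrow> int) \<Rightarrow> real" and \<alpha> :: real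
  assumes "is_dist {0..<n} \<mu>"
    and "0 < \<alpha>" and "\<alpha> < 1"
    and "\<forall>\<Lambda>. \<Lambda> \<subseteq> {0..<n} \<longrightarrow> (\<forall>\<sigma>\<in>supp \<Lambda> (marg {0..<n} \<mu> \<Lambda>).
           product_dominated ({0..<n} - \<Lambda>)
             (marg {0..<n} (cond {0..<n} \<mu> \<Lambda> \<sigma>) ({0..<n} - \<Lambda>)) (1 / \<alpha>))"
    and "1 / \<alpha> \<le> real l" and "l \<le> n"
  shows "uniform_block_factorization n \<mu> l ((exp 1 * real n / real l) powr (1 / \<alpha> + 1))"
  unfolding uniform_block_factorization_def
proof (intro allI impI)
  fix f :: "(nat \<Rightarrow> int) \<Rightarrow> real"
  assume "\<forall>\<sigma>\<in>supp {0..<n} \<mu>. 0 \<le> f \<sigma>"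
  define N where "N = {0..<n}"
  define A where "A = cond_xlogx N \<mu> f"
  have "finite N" "card N = n" unfolding N_def by simp_all
  have \<mu>: "\<forall>\<sigma>. 0 \<le> \<mu> \<sigma>" "sum \<mu> (cube N) = 1" using assms(1) unfolding is_dist_def N_def by auto
  have f: "\<forall>\<sigma>\<in>cube N. 0 < \<mu> \<sigma> \<longrightarrow> 0 \<le> f \<sigma>"
    using \<open>\<forall>\<sigma>\<in>supp {0..<n} \<mu>. 0 \<le> f \<sigma>\<close> unfolding supp_def N_def by auto
  have incr: "(\<Sum>i\<in>N - T. A (insert i T) - A T) \<le> 1 / \<alpha> * (A N - A T)" if "T \<subseteq> N" for T
    unfolding A_def using cond_xlogx_increments_le[OF \<open>finite N\<close> that \<mu>(1) f assms(2)] assms(4) that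
    unfolding N_def by blast
  have Ent: "Ent N \<mu> f = A N - A {}"
    unfolding A_def by (rule Ent_eq_cond_xlogx[OF \<open>finite N\<close> \<mu>(2)])
  moreover have "0 \<le> Ent N \<mu> f" using Ent_nonneg[OF \<open>finite N\<close> _ \<mu>(2) f] \<mu>(1) by blast
  ultimately have "A N - A {} \<le> (exp 1 * real n / real l) powr (1 / \<alpha> + 1) / real (n choose l)
                       * (\<Sum>B\<in>{B. B \<subseteq> N \<and> card B = l}. A N - A (N - B))"
    using uniform_block_bound_of_increments[OF \<open>finite N\<close> _ assms(5) _ _ incr] assms(2,6) \<open>card N = n\<close> by simp
  then show "Ent {0..<n} \<mu> f \<le> (exp 1 * real n / real l) powr (1 / \<alpha> + 1) / real (n choose l)
      * (\<Sum>B\<in>{B. B \<subseteq> {0..<n} \<and> card B = l}. block_ent n \<mu> B f)"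
    using Ent block_ent_eq_cond_xlogx[OF \<mu>(1)] unfolding A_def N_def by simp
qed

end
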